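(* There exists an independence system that is nearly finitary but is not $k$-nearly finitary for any $k\in\mathbb{N}$.
   Context: An independence system is a pair $I=(E,\mathcal{L})$ with $\mathcal{L}\subseteq 2^E$, $\emptyset\in\mathcal{L}$, and $\mathcal{L}$ closed under taking subsets. Its bases are the inclusion-maximal elements of $\mathcal{L}$. Its finitarization is $I^{\mathrm{fin}}=(E,\mathcal{L}^{\mathrm{fin}})$ where $\mathcal{L}^{\mathrm{fin}}$ consists of the sets all of whose finite subsets lie in $\mathcal{L}$. $I$ is nearly finitary if whenever a base $F$ of $I^{\mathrm{fin}}$ contains a base $B$ of $I$, the set $F\setminus B$ is finite; $I$ is $k$-nearly finitary if $|F\setminus B|\le k$ for every such pair. *)

theory Defs
  imports Main
begin

definition indep_system :: "'a set \<Rightarrow> 'a set set \<Rightarrow> bool" where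
  "indep_system E L \<longleftrightarrow> L \<subseteq> Pow E \<and> {} \<in> L \<and> (\<forall>X\<in>L. \<forall>Y. Y \<subseteq> X \<longrightarrow> Y \<in> L)"

definition is_base :: "'a set set \<Rightarrow> 'a set \<Rightarrow> bool" where
  "is_base L B \<longleftrightarrow> B \<in> L \<and> (\<forall>X\<in>L. B \<subseteq> X \<longrightarrow> X = B)"

definition fin_closure :: "'a set \<Rightarrow> 'a set set \<Rightarrow> 'a set set" where
  "fin_closure E L = {X. X \<subseteq> E \<and> (\<forall>Y. Y \<subseteq> X \<and> finite Y \<longrightarrow> Y \<in> L)}"

definition nearly_finitary :: "'a set \<Rightarrow> 'a set set \<Rightarrow> bool" where
  "nearly_finitary E L \<longleftrightarrow>
     (\<forall>F B. is_base (fin_closure E L) F \<and> is_base L B \<and> B \<subseteq> F \<longrightarrow> finite (F - B))"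

definition k_nearly_finitary :: "nat \<Rightarrow> 'a set \<Rightarrow> 'a set set \<Rightarrow> bool" where
  "k_nearly_finitary k E L \<longleftrightarrow>
     (\<forall>F B. is_base (fin_closure E L) F \<and> is_base L B \<and> B \<subseteq> F \<longrightarrow>
        finite (F - B) \<and> card (F - B) \<le> k)"

end

theory Submission
  imports Defs "HOL-Library.Disjoint_Sets"
begin

text \<open>Split an infinite ground set into pairwise disjoint finite nonempty blocks \<open>C i\<close> and
  call a set independent if it is finite or misses some whole block. Every finite set is
  independent, so the finitarization is the full power set and its only base is the ground
  set, while the bases of the system itself are exactly the complements of the blocks. Hence
  the excess of the finitary base over a base is a single block: always finite, but of
  unbounded size once the blocks grow, e.g. the dyadic blocks \<open>[2^k, 2^(k+1))\<close> of \<open>\<nat>\<close>.\<close>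

definition avoiding_block :: "('i \<Rightarrow> 'a set) \<Rightarrow> 'a set set" where
  "avoiding_block C = {X. finite X \<or> (\<exists>i. X \<subseteq> - C i)}"

lemma indep_system_avoiding_block: "indep_system UNIV (avoiding_block C)"
  unfolding indep_system_def avoiding_block_def by (blast intro: finite_subset)

lemma fin_closure_avoiding_block: "fin_closure UNIV (avoiding_block C) = UNIV"
  by (auto simp: fin_closure_def avoiding_block_def)

lemma is_base_UNIV_iff: "is_base UNIV F \<longleftrightarrow> F = UNIV"
  by (auto simp: is_base_def)

lemma is_base_avoiding_block_iff:
  fixes C :: "'i \<Rightarrow> 'a set"
  assumes "infinite (UNIV :: 'a set)" and finite: "\<And>i. finite (C i)"
    and nonempty: "\<And>i. C i \<noteq> {}" and disjoint: "disjoint_family C"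
  shows "is_base (avoiding_block C) B \<longleftrightarrow> (\<exists>i. B = - C i)"
proof
  assume base: "is_base (avoiding_block C) B"
  show "\<exists>i. B = - C i"
  proof (cases "finite B")
    case True
    then obtain x where "x \<notin> B"
      using ex_new_if_finite[OF assms(1)] by blast
    moreover have "insert x B \<in> avoiding_block C"
      using True by (simp add: avoiding_block_def)
    ultimately show ?thesis
      using base by (auto simp: is_base_def)
  next
    case False
    then obtain i where "B \<subseteq> - C i"
      using base by (auto simp: is_base_def avoiding_block_def)
    moreover have "- C i \<in> avoiding_block C"
      by (auto simp: avoiding_block_def)
    ultimately show ?thesis
      using base unfolding is_base_def by blast
  qed
next
  assume "\<exists>i. B = - C i"
  then obtain i where B: "B = - C i" ..
  show "is_base (avoiding_block C) B"
    unfolding is_base_def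
  proof (intro conjI ballI impI)
    show "B \<in> avoiding_block C"
      using B by (auto simp: avoiding_block_def)
    fix X assume X: "X \<in> avoiding_block C" "B \<subseteq> X"
    have "infinite B"
      using B assms(1) finite by (metis finite_compl)
    with X obtain j where j: "X \<subseteq> - C j"
      by (auto simp: avoiding_block_def intro: finite_subset)
    have "C j \<inter> C i \<noteq> {}"
      using j X(2) B nonempty[of j] by blast
    then have "j = i"
      using disjoint_family_onD[OF disjoint] by blast
    with j X(2) B show "X = B" by blast
  qed
qed

lemma nearly_finitary_avoiding_block:
  assumes "infinite (UNIV :: 'a set)" and "\<And>i. finite (C i)"
    and "\<And>i. C i \<noteq> {}" and "disjoint_family C"
  shows "nearly_finitary (UNIV :: 'a set) (avoiding_block C)"
  using assms
  by (auto simp: nearly_finitary_def fin_closure_avoiding_block is_base_UNIV_iff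
      is_base_avoiding_block_iff)

lemma not_k_nearly_finitary_avoiding_block:
  assumes "infinite (UNIV :: 'a set)" and "\<And>i. finite (C i)"
    and "\<And>i. C i \<noteq> {}" and "disjoint_family C"
    and "k < card (C i)"
  shows "\<not> k_nearly_finitary k (UNIV :: 'a set) (avoiding_block C)"
proof
  assume "k_nearly_finitary k UNIV (avoiding_block C)"
  moreover have "is_base (avoiding_block C) (- C i)"
    using assms(1-4) is_base_avoiding_block_iff by blast
  ultimately have "card (UNIV - (- C i)) \<le> k"
    unfolding k_nearly_finitary_def fin_closure_avoiding_block is_base_UNIV_iff by blast
  with assms(5) show False by simp
qed

definition dyadic_block :: "nat \<Rightarrow> nat set" where
  "dyadic_block k = {2 ^ k..<2 ^ Suc k}"

lemma card_dyadic_block: "card (dyadic_block k) = 2 ^ k"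
  by (simp add: dyadic_block_def)

lemma disjoint_family_dyadic_block: "disjoint_family dyadic_block"
unfolding disjoint_family_on_def
proof (intro ballI impI)
  fix k j :: nat assume "k \<noteq> j"
  then consider "k < j" | "j < k" by linarith
  then show "dyadic_block k \<inter> dyadic_block j = {}"
  proof cases
    case 1
    have "(2::nat) ^ Suc k \<le> 2 ^ j"
      using 1 by (intro power_increasing) simp_all
    then show ?thesis by (auto simp: dyadic_block_def)
  next
    case 2
    have "(2::nat) ^ Suc j \<le> 2 ^ k"
      using 2 by (intro power_increasing) simp_all
    then show ?thesis by (auto simp: dyadic_block_def)
  qed
qed

theorem theorem4p2p1:
  shows "\<exists>(E :: nat set) (L :: nat set set). indep_system E L \<and> nearly_finitary E L \<and>
           (\<forall>k. \<not> k_nearly_finitary k E L)"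
proof (intro exI conjI allI)
  have blocks: "\<And>k. finite (dyadic_block k)" "\<And>k. dyadic_block k \<noteq> {}"
    by (simp_all add: dyadic_block_def)
  show "indep_system UNIV (avoiding_block dyadic_block)"
    by (rule indep_system_avoiding_block)
  show "nearly_finitary UNIV (avoiding_block dyadic_block)"
    using blocks disjoint_family_dyadic_block
    by (intro nearly_finitary_avoiding_block) simp_all
  fix k :: nat
  have "k < card (dyadic_block k)"
    by (simp add: card_dyadic_block less_exp)
  then show "\<not> k_nearly_finitary k UNIV (avoiding_block dyadic_block)"
    using blocks disjoint_family_dyadic_block
    by (intro not_k_nearly_finitary_avoiding_block) simp_all
qed

end
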